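(* Let $(\mathcal M,X,\bot)$ be an accessible concurrent system. The following are equivalent: (1) the system is irreducible; (2) for some state $\alpha$ and some letter $a$, there exists an $a$-rooted linking execution from $\alpha$; (3) for every state $\alpha$ and every letter $a$, there exists an $a$-rooted linking execution from $\alpha$.
   Context: A trace monoid $\mathcal M=\mathcal M(\Sigma,I)$ is $\langle\Sigma\mid ab=ba\ ((a,b)\in I)\rangle$, $\Sigma$ finite, $I$ irreflexive symmetric; $D=(\Sigma\times\Sigma)\setminus I$; $\mathcal M$ is irreducible if $(\Sigma,D)$ is connected. A concurrent system $(\mathcal M,X,\bot)$: $X$ finite, $\bot\notin X$, right action of $\mathcal M$ on $X\cup\{\bot\}$ with $\bot\cdot x=\bot$. Accessible: for all $\alpha,\beta\in X$ some $x$ with $\alpha\cdot x=\beta$. Alive: for every $\alpha$ and $a\in\Sigma$ some $x$ containing $a$ with $\alpha\cdot x\ne\bot$. Irreducible: accessible, alive and $\mathcal M$ irreducible. A linking sequence from $\alpha$ is a sequence of letters $a_1,\dots,a_p$ such that, for some indices $1\le j_1<\dots<j_q\le p$: $\alpha\cdot(a_1\cdots a_p)\ne\bot$; $(a_{j_k},a_{j_{k+1}})\in D$ for $k=1,\dots,q-1$; and every letter of $\Sigma$ occurs in $(a_{j_1},\dots,a_{j_q})$. It is $a$-rooted if the indices can be chosen with $a_{j_1}=a$. A (resp. $a$-rooted) linking execution from $\alpha$ is the image in $\mathcal M$ of a (resp. $a$-rooted) linking sequence from $\alpha$. *)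

theory Defs
  imports Main
begin

text \<open>Trace monoid M(Sigma,I): alphabet Sigma (finite), independence relation I
 (irreflexive, symmetric on Sigma). Dependence D = Sigma x Sigma - I.\<close>

definition trace_alphabet :: "'a set \<Rightarrow> ('a \<times> 'a) set \<Rightarrow> bool" where
  "trace_alphabet Sig I \<longleftrightarrow> finite Sig \<and> I \<subseteq> Sig \<times> Sig \<and> irrefl I \<and> sym I"

definition dep :: "'a set \<Rightarrow> ('a \<times> 'a) set \<Rightarrow> ('a \<times> 'a) set" where
  "dep Sig I = (Sig \<times> Sig) - I"

definition trace_irreducible :: "'a set \<Rightarrow> ('a \<times> 'a) set \<Rightarrow> bool" where
  "trace_irreducible Sig I \<longleftrightarrow> Sig \<noteq> {} \<and> (\<forall>a\<in>Sig. \<forall>b\<in>Sig. (a, b) \<in> (dep Sig I)\<^sup>*)"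

text \<open>Right action of the trace monoid on X \<union> {bot}: bot is modelled by None.\<close>
fun run :: "('x \<Rightarrow> 'a \<Rightarrow> 'x option) \<Rightarrow> 'x option \<Rightarrow> 'a list \<Rightarrow> 'x option" where
  "run step s [] = s"
| "run step s (c # w) = run step (Option.bind s (\<lambda>x. step x c)) w"

text \<open>A concurrent system (M, X, bot): X finite, the letters act on X \<union> {bot}
 (mapping X into X \<union> {bot}), and the defining relations ab = ba for (a,b) in I
 are respected, so that this is a right action of the trace monoid.\<close>
definition concurrent_system ::
  "'a set \<Rightarrow> ('a \<times> 'a) set \<Rightarrow> 'x set \<Rightarrow> ('x \<Rightarrow> 'a \<Rightarrow> 'x option) \<Rightarrow> bool" where
  "concurrent_system Sig I X step \<longleftrightarrow>
     trace_alphabet Sig I \<and> finite X \<and>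
     (\<forall>x\<in>X. \<forall>c\<in>Sig. step x c = None \<or> (\<exists>y\<in>X. step x c = Some y)) \<and>
     (\<forall>x\<in>X. \<forall>(a, b)\<in>I. run step (Some x) [a, b] = run step (Some x) [b, a])"

definition cs_accessible ::
  "'a set \<Rightarrow> 'x set \<Rightarrow> ('x \<Rightarrow> 'a \<Rightarrow> 'x option) \<Rightarrow> bool" where
  "cs_accessible Sig X step \<longleftrightarrow>
     (\<forall>\<alpha>\<in>X. \<forall>\<beta>\<in>X. \<exists>w \<in> lists Sig. run step (Some \<alpha>) w = Some \<beta>)"

definition cs_alive ::
  "'a set \<Rightarrow> 'x set \<Rightarrow> ('x \<Rightarrow> 'a \<Rightarrow> 'x option) \<Rightarrow> bool" where
  "cs_alive Sig X step \<longleftrightarrow>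
     (\<forall>\<alpha>\<in>X. \<forall>a\<in>Sig. \<exists>w \<in> lists Sig. a \<in> set w \<and> run step (Some \<alpha>) w \<noteq> None)"

definition cs_irreducible ::
  "'a set \<Rightarrow> ('a \<times> 'a) set \<Rightarrow> 'x set \<Rightarrow> ('x \<Rightarrow> 'a \<Rightarrow> 'x option) \<Rightarrow> bool" where
  "cs_irreducible Sig I X step \<longleftrightarrow>
     cs_accessible Sig X step \<and> cs_alive Sig X step \<and> trace_irreducible Sig I"

definition rooted_linking_sequence ::
  "'a set \<Rightarrow> ('a \<times> 'a) set \<Rightarrow> ('x \<Rightarrow> 'a \<Rightarrow> 'x option) \<Rightarrow> 'x \<Rightarrow> 'a \<Rightarrow> 'a list \<Rightarrow> bool" where
  "rooted_linking_sequence Sig I step \<alpha> a w \<longleftrightarrow>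
     w \<in> lists Sig \<and> run step (Some \<alpha>) w \<noteq> None \<and>
     (\<exists>js :: nat list.
        js \<noteq> [] \<and> sorted_wrt (<) js \<and> (\<forall>j\<in>set js. j < length w) \<and>
        (\<forall>k. Suc k < length js \<longrightarrow> (w ! (js ! k), w ! (js ! Suc k)) \<in> dep Sig I) \<and>
        Sig \<subseteq> set (map (\<lambda>j. w ! j) js) \<and>
        w ! (js ! 0) = a)"

text \<open>An a-rooted linking execution from alpha exists iff an a-rooted linking
 sequence from alpha exists (executions are images of sequences in M).\<close>
definition has_rooted_linking_execution ::
  "'a set \<Rightarrow> ('a \<times> 'a) set \<Rightarrow> ('x \<Rightarrow> 'a \<Rightarrow> 'x option) \<Rightarrow> 'x \<Rightarrow> 'a \<Rightarrow> bool" where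
  "has_rooted_linking_execution Sig I step \<alpha> a \<longleftrightarrow>
     (\<exists>w. rooted_linking_sequence Sig I step \<alpha> a w)"

end

theory Submission
  imports Defs
begin

(* The letters selected by a linking sequence form a walk in the dependence graph (Sig, D)
   through every letter, so the graph is connected; and since every state can reach alpha,
   prefixing a word leading to alpha gives, from any state, an executable word containing every letter,
   so the system is alive.  Conversely, if (Sig, D) is connected there is a walk from a through
   all letters, and liveness lets one execute its letters one after the other (each time
   appending an executable word containing the next letter), so the walk occurs as a scattered
   subword of an executable word from any state. *)

lemma rtrancl_imp_walk:
  "(x, y) \<in> R\<^sup>* \<Longrightarrow> \<exists>P. P \<noteq> [] \<and> hd P = x \<and> last P = y \<and>
     successively (\<lambda>u v. (u, v) \<in> R) P \<and> set P \<subseteq> insert x (Range R)"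
proof (induction rule: rtrancl_induct)
  case base
  show ?case by (intro exI[of _ "[x]"]) auto
next
  case (step y z)
  then obtain P where "P \<noteq> []" "hd P = x" "last P = y"
    "successively (\<lambda>u v. (u, v) \<in> R) P" "set P \<subseteq> insert x (Range R)"
    by blast
  with step.hyps(2) show ?case
    by (intro exI[of _ "P @ [z]"]) (auto simp: successively_append_iff)
qed

lemma walk_from_hd_rtrancl:
  "successively (\<lambda>u v. (u, v) \<in> R) P \<Longrightarrow> y \<in> set P \<Longrightarrow> (hd P, y) \<in> R\<^sup>*"
proof (induction P rule: induct_list012)
  case (3 x z P)
  then show ?case
    by (auto intro: converse_rtrancl_into_rtrancl)
qed auto

lemma sym_walk_connects:
  assumes "sym R" "successively (\<lambda>u v. (u, v) \<in> R) P" "y \<in> set P" "z \<in> set P"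
  shows "(y, z) \<in> R\<^sup>*"
proof -
  have "(y, hd P) \<in> R\<^sup>*"
    using walk_from_hd_rtrancl[OF assms(2,3)] sym_rtrancl[OF assms(1)] by (auto dest: symD)
  then show ?thesis
    using walk_from_hd_rtrancl[OF assms(2,4)] by (rule rtrancl_trans)
qed

lemma connected_imp_covering_walk:
  assumes "R \<subseteq> A \<times> A" "a \<in> A" "\<forall>x\<in>A. \<forall>y\<in>A. (x, y) \<in> R\<^sup>*" "finite S" "S \<subseteq> A"
  shows "\<exists>L. L \<noteq> [] \<and> hd L = a \<and> successively (\<lambda>u v. (u, v) \<in> R) L \<and> S \<subseteq> set L \<and> set L \<subseteq> A"
  using assms(4,5)
proof (induction S rule: finite_induct)
  case empty
  show ?case using assms(2) by (intro exI[of _ "[a]"]) auto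
next
  case (insert b S)
  then obtain L where L: "L \<noteq> []" "hd L = a" "successively (\<lambda>u v. (u, v) \<in> R) L"
    "S \<subseteq> set L" "set L \<subseteq> A"
    by auto
  then have "(last L, b) \<in> R\<^sup>*"
    using assms(3) insert.prems last_in_set by blast
  then obtain P where P: "P \<noteq> []" "hd P = last L" "last P = b"
    "successively (\<lambda>u v. (u, v) \<in> R) P" "set P \<subseteq> insert (last L) (Range R)"
    using rtrancl_imp_walk by metis
  then obtain P' where P': "P = last L # P'"
    by (cases P) auto
  have "b \<in> set (L @ P')"
    using P(3) P' L(1) by (cases "P' = []") auto
  moreover have "set P' \<subseteq> A"
  proof -
    have "Range R \<subseteq> A" "last L \<in> A"
      using assms(1) L(1,5) by auto
    then have "set P \<subseteq> A"
      using P(5) by blast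
    then show ?thesis
      using P' by simp
  qed
  moreover have "successively (\<lambda>u v. (u, v) \<in> R) (L @ P')"
    using L(1,3) P(4) P' by (auto simp: successively_append_iff successively_Cons)
  ultimately show ?case
    using L by (intro exI[of _ "L @ P'"]) auto
qed

lemma sym_dep: "sym I \<Longrightarrow> sym (dep Sig I)"
  unfolding dep_def sym_def by auto

lemma run_None [simp]: "run step None w = None"
  by (induction w) auto

lemma run_append: "run step s (u @ v) = run step (run step s u) v"
  by (induction u arbitrary: s) auto

lemma run_closed:
  assumes "\<forall>x\<in>X. \<forall>c\<in>Sig. step x c = None \<or> (\<exists>y\<in>X. step x c = Some y)"
  shows "x \<in> X \<Longrightarrow> w \<in> lists Sig \<Longrightarrow> run step (Some x) w = Some y \<Longrightarrow> y \<in> X"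
proof (induction w arbitrary: x)
  case (Cons c w)
  then show ?case
    using assms by (cases "step x c") fastforce+
qed simp

lemma alive_realises_subsequence:
  assumes closed: "\<forall>x\<in>X. \<forall>c\<in>Sig. step x c = None \<or> (\<exists>y\<in>X. step x c = Some y)"
    and alive: "cs_alive Sig X step"
  shows "L \<in> lists Sig \<Longrightarrow> \<alpha> \<in> X \<Longrightarrow>
    \<exists>w js. w \<in> lists Sig \<and> run step (Some \<alpha>) w \<noteq> None \<and>
      sorted_wrt (<) js \<and> (\<forall>j\<in>set js. j < length w) \<and> map ((!) w) js = L"
proof (induction L arbitrary: \<alpha>)
  case Nil
  then show ?case by (intro exI[of _ "[]"]) auto
next
  case (Cons c L)
  obtain u where u: "u \<in> lists Sig" "c \<in> set u" "run step (Some \<alpha>) u \<noteq> None"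
    using alive Cons.prems unfolding cs_alive_def by (meson Cons_in_lists_iff)
  then obtain \<beta> where \<beta>: "run step (Some \<alpha>) u = Some \<beta>"
    by blast
  have "\<beta> \<in> X"
    using run_closed[OF closed Cons.prems(2) u(1) \<beta>] .
  moreover have "L \<in> lists Sig"
    using Cons.prems(1) by simp
  ultimately obtain v js where v: "v \<in> lists Sig" "run step (Some \<beta>) v \<noteq> None"
    "sorted_wrt (<) js" "\<forall>j\<in>set js. j < length v" "map ((!) v) js = L"
    using Cons.IH by blast
  obtain i where i: "i < length u" "u ! i = c"
    using u(2) by (auto simp: in_set_conv_nth)
  show ?case
  proof (intro exI[of _ "u @ v"] exI[of _ "i # map (\<lambda>j. length u + j) js"] conjI)
    show "u @ v \<in> lists Sig" "run step (Some \<alpha>) (u @ v) \<noteq> None"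
      using u(1) v(1,2) \<beta> by (auto simp: run_append)
    show "sorted_wrt (<) (i # map (\<lambda>j. length u + j) js)"
      using v(3) i(1) by (auto simp: sorted_wrt_map)
    show "\<forall>j\<in>set (i # map (\<lambda>j. length u + j) js). j < length (u @ v)"
      using v(4) i(1) by auto
    show "map ((!) (u @ v)) (i # map (\<lambda>j. length u + j) js) = c # L"
      using i v(5) by (auto simp: nth_append)
  qed
qed

definition covering_dependence_walk :: "'a set \<Rightarrow> ('a \<times> 'a) set \<Rightarrow> 'a \<Rightarrow> 'a list \<Rightarrow> bool" where
  "covering_dependence_walk Sig I a L \<longleftrightarrow>
     L \<noteq> [] \<and> hd L = a \<and> successively (\<lambda>x y. (x, y) \<in> dep Sig I) L \<and> Sig \<subseteq> set L"

lemma rooted_linking_sequence_iff: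
  "rooted_linking_sequence Sig I step \<alpha> a w \<longleftrightarrow>
     w \<in> lists Sig \<and> run step (Some \<alpha>) w \<noteq> None \<and>
     (\<exists>js. sorted_wrt (<) js \<and> (\<forall>j\<in>set js. j < length w) \<and>
        covering_dependence_walk Sig I a (map ((!) w) js))"
  unfolding rooted_linking_sequence_def covering_dependence_walk_def
  by (auto simp: successively_conv_nth hd_conv_nth)

lemma accessible_imp_alive:
  assumes "cs_accessible Sig X step" "\<alpha> \<in> X"
    and "w \<in> lists Sig" "run step (Some \<alpha>) w \<noteq> None" "Sig \<subseteq> set w"
  shows "cs_alive Sig X step"
  unfolding cs_alive_def
proof (intro ballI)
  fix \<beta> b
  assume "\<beta> \<in> X" "b \<in> Sig"
  then obtain u where u: "u \<in> lists Sig" "run step (Some \<beta>) u = Some \<alpha>"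
    using assms(1,2) unfolding cs_accessible_def by blast
  have "u @ w \<in> lists Sig" "b \<in> set (u @ w)"
    using u(1) assms(3,5) \<open>b \<in> Sig\<close> by auto
  moreover have "run step (Some \<beta>) (u @ w) \<noteq> None"
    using u(2) assms(4) by (simp add: run_append)
  ultimately show "\<exists>w\<in>lists Sig. b \<in> set w \<and> run step (Some \<beta>) w \<noteq> None"
    by blast
qed

lemma covering_walk_imp_trace_irreducible:
  assumes "sym I" "L \<in> lists Sig" "covering_dependence_walk Sig I a L"
  shows "trace_irreducible Sig I"
proof -
  have "Sig = set L"
    using assms(2,3) unfolding covering_dependence_walk_def by auto
  then show ?thesis
    using assms(3) sym_walk_connects[OF sym_dep[OF assms(1)]]
    unfolding covering_dependence_walk_def trace_irreducible_def by auto
qed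

lemma trace_irreducible_imp_covering_walk:
  assumes "finite Sig" "trace_irreducible Sig I" "a \<in> Sig"
  shows "\<exists>L\<in>lists Sig. covering_dependence_walk Sig I a L"
proof -
  have "dep Sig I \<subseteq> Sig \<times> Sig"
    unfolding dep_def by blast
  from connected_imp_covering_walk[OF this assms(3) _ assms(1) subset_refl] assms(2)
  show ?thesis
    unfolding covering_dependence_walk_def trace_irreducible_def by auto
qed

lemma linking_execution_imp_cs_irreducible:
  assumes "sym I" "cs_accessible Sig X step" "\<alpha> \<in> X"
    and "has_rooted_linking_execution Sig I step \<alpha> a"
  shows "cs_irreducible Sig I X step"
proof -
  obtain w js where w: "w \<in> lists Sig" "run step (Some \<alpha>) w \<noteq> None"
    "\<forall>j\<in>set js. j < length w" "covering_dependence_walk Sig I a (map ((!) w) js)"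
    using assms(4) unfolding has_rooted_linking_execution_def rooted_linking_sequence_iff by blast
  have walk_in_w: "set (map ((!) w) js) \<subseteq> set w"
    using w(3) by auto
  then have "Sig \<subseteq> set w"
    using w(4) unfolding covering_dependence_walk_def by blast
  moreover have "map ((!) w) js \<in> lists Sig"
    using walk_in_w w(1) unfolding lists_eq_set by blast
  ultimately have "trace_irreducible Sig I" "cs_alive Sig X step"
    using covering_walk_imp_trace_irreducible[OF assms(1) _ w(4)]
      accessible_imp_alive[OF assms(2,3) w(1,2)] by auto
  then show ?thesis
    using assms(2) unfolding cs_irreducible_def by blast
qed

lemma cs_irreducible_imp_linking_execution:
  assumes "concurrent_system Sig I X step" "cs_irreducible Sig I X step" "\<alpha> \<in> X" "a \<in> Sig"
  shows "has_rooted_linking_execution Sig I step \<alpha> a"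
proof -
  have closed: "\<forall>x\<in>X. \<forall>c\<in>Sig. step x c = None \<or> (\<exists>y\<in>X. step x c = Some y)"
    and "finite Sig"
    using assms(1) unfolding concurrent_system_def trace_alphabet_def by auto
  have alive: "cs_alive Sig X step" and irreducible: "trace_irreducible Sig I"
    using assms(2) unfolding cs_irreducible_def by auto
  obtain L where L: "L \<in> lists Sig" "covering_dependence_walk Sig I a L"
    using trace_irreducible_imp_covering_walk[OF \<open>finite Sig\<close> irreducible assms(4)] by blast
  obtain w js where "w \<in> lists Sig" "run step (Some \<alpha>) w \<noteq> None"
    "sorted_wrt (<) js" "\<forall>j\<in>set js. j < length w" "map ((!) w) js = L"
    using alive_realises_subsequence[OF closed alive L(1) assms(3)] by blast
  then show ?thesis
    using L(2) unfolding has_rooted_linking_execution_def rooted_linking_sequence_iff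
    by (intro exI[of _ w] conjI exI[of _ js]) simp_all
qed

theorem proposition9:
  fixes Sig :: "'a set" and I :: "('a \<times> 'a) set" and X :: "'x set"
    and step :: "'x \<Rightarrow> 'a \<Rightarrow> 'x option"
  assumes "concurrent_system Sig I X step"
    and "Sig \<noteq> {}" and "X \<noteq> {}"
    and "cs_accessible Sig X step"
  shows "(cs_irreducible Sig I X step
            \<longleftrightarrow> (\<exists>\<alpha>\<in>X. \<exists>a\<in>Sig. has_rooted_linking_execution Sig I step \<alpha> a))
       \<and> ((\<exists>\<alpha>\<in>X. \<exists>a\<in>Sig. has_rooted_linking_execution Sig I step \<alpha> a)
            \<longleftrightarrow> (\<forall>\<alpha>\<in>X. \<forall>a\<in>Sig. has_rooted_linking_execution Sig I step \<alpha> a))"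
proof -
  have "sym I"
    using assms(1) unfolding concurrent_system_def trace_alphabet_def by auto
  have some_imp_irreducible: "cs_irreducible Sig I X step"
    if "\<exists>\<alpha>\<in>X. \<exists>a\<in>Sig. has_rooted_linking_execution Sig I step \<alpha> a"
    using that linking_execution_imp_cs_irreducible[OF \<open>sym I\<close> assms(4)] by blast
  have irreducible_imp_all: "\<forall>\<alpha>\<in>X. \<forall>a\<in>Sig. has_rooted_linking_execution Sig I step \<alpha> a"
    if "cs_irreducible Sig I X step"
    using cs_irreducible_imp_linking_execution[OF assms(1) that] by blast
  have all_imp_some: "\<exists>\<alpha>\<in>X. \<exists>a\<in>Sig. has_rooted_linking_execution Sig I step \<alpha> a"
    if "\<forall>\<alpha>\<in>X. \<forall>a\<in>Sig. has_rooted_linking_execution Sig I step \<alpha> a"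
    using that assms(2,3) by blast
  show ?thesis
    using some_imp_irreducible irreducible_imp_all all_imp_some by argo
qed

end
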